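(* Let $\mathcal{H}$ be a complex Hilbert space, let $A\in\mathcal{B}(\mathcal{H})$ be a nonzero positive operator, and let $\mathbb{A}=\begin{pmatrix}A&O\\O&A\end{pmatrix}$ on $\mathcal{H}\oplus\mathcal{H}$. Let $P,Q,R,S\in\mathcal{B}_A(\mathcal{H})$. Then $$\omega_{\mathbb{A}}\left[\begin{pmatrix}P&Q\\R&S\end{pmatrix}\right]\leq\frac12\Big(\omega_A(P)+\omega_A(S)+\sqrt{(\omega_A(P)-\omega_A(S))^2+(\omega_A(Q+R)+\omega_A(Q-R))^2}\Big),$$ and moreover the right-hand side is at most $\max\{\omega_A(P),\omega_A(S)\}+\frac{\omega_A(Q+R)+\omega_A(Q-R)}{2}$.
   Context: For a positive operator $A$ on $\mathcal{H}$, $\langle x,y\rangle_A:=\langle Ax,y\rangle$ and $\|x\|_A:=\sqrt{\langle x,x\rangle_A}$. $\mathcal{B}_A(\mathcal{H})$ is the set of $T\in\mathcal{B}(\mathcal{H})$ with $\mathcal{R}(T^*A)\subseteq\mathcal{R}(A)$ (operators admitting an $A$-adjoint). $\omega_A(T):=\sup\{|\langle Tx,x\rangle_A|:x\in\mathcal{H},\|x\|_A=1\}$. $\omega_{\mathbb{A}}$ is defined analogously on $\mathcal{H}\oplus\mathcal{H}$ with $\langle (x_1,x_2),(y_1,y_2)\rangle_{\mathbb{A}}=\langle x_1,y_1\rangle_A+\langle x_2,y_2\rangle_A$. *)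

theory Defs
  imports "HOL-Analysis.Analysis"
begin

class complex_inner = real_normed_vector +
  fixes cscale :: "complex \<Rightarrow> 'a \<Rightarrow> 'a"
    and cinner :: "'a \<Rightarrow> 'a \<Rightarrow> complex"
  assumes cscale_add_right: "cscale c (x + y) = cscale c x + cscale c y"
    and cscale_add_left: "cscale (c + d) x = cscale c x + cscale d x"
    and cscale_cscale: "cscale c (cscale d x) = cscale (c * d) x"
    and cscale_one: "cscale 1 x = x"
    and cscale_of_real: "cscale (complex_of_real r) x = scaleR r x"
    and cinner_conj: "cinner x y = cnj (cinner y x)"
    and cinner_add_left: "cinner (x + y) z = cinner x z + cinner y z"
    and cinner_cscale_left: "cinner (cscale c x) y = c * cinner x y"
    and cinner_ge_zero: "0 \<le> Re (cinner x x)"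
    and cinner_eq_zero_iff: "cinner x x = 0 \<longleftrightarrow> x = 0"
    and norm_eq_sqrt_cinner: "norm x = sqrt (Re (cinner x x))"

class chilbert_space = complex_inner + complete_space

definition bounded_clinear_op :: "('a::complex_inner \<Rightarrow> 'a) \<Rightarrow> bool" where
  "bounded_clinear_op T \<longleftrightarrow> bounded_linear T \<and> (\<forall>c x. T (cscale c x) = cscale c (T x))"

definition cadjoint :: "('a::complex_inner \<Rightarrow> 'a) \<Rightarrow> ('a \<Rightarrow> 'a)" where
  "cadjoint T = (THE S. \<forall>x y. cinner (T x) y = cinner x (S y))"

definition positive_op :: "('a::complex_inner \<Rightarrow> 'a) \<Rightarrow> bool" where
  "positive_op A \<longleftrightarrow> bounded_clinear_op A \<and>
     (\<forall>x. Im (cinner (A x) x) = 0 \<and> 0 \<le> Re (cinner (A x) x))"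

definition BA :: "('a::complex_inner \<Rightarrow> 'a) \<Rightarrow> ('a \<Rightarrow> 'a) set" where
  "BA A = {T. bounded_clinear_op T \<and> range (cadjoint T \<circ> A) \<subseteq> range A}"

definition omega_ip :: "('b \<Rightarrow> 'b \<Rightarrow> complex) \<Rightarrow> ('b \<Rightarrow> 'b) \<Rightarrow> real" where
  "omega_ip ip T = Sup {cmod (ip (T x) x) | x. ip x x = 1}"

text \<open>\<open>\<langle>x,y\<rangle>_A = \<langle>Ax,y\<rangle>\<close>; note \<open>\<parallel>x\<parallel>_A = 1\<close> iff \<open>\<langle>x,x\<rangle>_A = 1\<close>.\<close>
definition A_inner :: "('a::complex_inner \<Rightarrow> 'a) \<Rightarrow> 'a \<Rightarrow> 'a \<Rightarrow> complex" where
  "A_inner A x y = cinner (A x) y"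

definition omega_A :: "('a::complex_inner \<Rightarrow> 'a) \<Rightarrow> ('a \<Rightarrow> 'a) \<Rightarrow> real" where
  "omega_A A T = omega_ip (A_inner A) T"

definition AA_inner :: "('a::complex_inner \<Rightarrow> 'a) \<Rightarrow> 'a \<times> 'a \<Rightarrow> 'a \<times> 'a \<Rightarrow> complex" where
  "AA_inner A x y = A_inner A (fst x) (fst y) + A_inner A (snd x) (snd y)"

definition block_op :: "('a::complex_inner \<Rightarrow> 'a) \<Rightarrow> ('a \<Rightarrow> 'a) \<Rightarrow> ('a \<Rightarrow> 'a) \<Rightarrow> ('a \<Rightarrow> 'a)
    \<Rightarrow> 'a \<times> 'a \<Rightarrow> 'a \<times> 'a" where
  "block_op P Q R S x = (P (fst x) + Q (snd x), R (fst x) + S (snd x))"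

definition omega_AA :: "('a::complex_inner \<Rightarrow> 'a) \<Rightarrow> ('a \<times> 'a \<Rightarrow> 'a \<times> 'a) \<Rightarrow> real" where
  "omega_AA A T = omega_ip (AA_inner A) T"

end

theory Submission
  imports Defs
begin

text \<open>
  At a point \<open>(x\<^sub>1, x\<^sub>2)\<close> of \<open>\<A>\<close>-norm one, with \<open>q\<^sub>i = \<parallel>x\<^sub>i\<parallel>\<^sub>A\<^sup>2\<close>, the form of the block
  operator is \<open>\<langle>Px\<^sub>1,x\<^sub>1\<rangle>\<^sub>A + \<langle>Sx\<^sub>2,x\<^sub>2\<rangle>\<^sub>A + (\<langle>Qx\<^sub>2,x\<^sub>1\<rangle>\<^sub>A + \<langle>Rx\<^sub>1,x\<^sub>2\<rangle>\<^sub>A)\<close>.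
  The diagonal terms are at most \<open>p q\<^sub>1\<close> and \<open>s q\<^sub>2\<close>, where \<open>p = \<omega>\<^sub>A(P)\<close>, \<open>s = \<omega>\<^sub>A(S)\<close>.
  Twice the off-diagonal term is a polarised form of \<open>Q + R\<close> plus a skew-polarised form of
  \<open>Q - R\<close>, hence it is at most \<open>c (q\<^sub>1 + q\<^sub>2) / 2\<close> with \<open>c = \<omega>\<^sub>A(Q+R) + \<omega>\<^sub>A(Q-R)\<close>; replacing
  \<open>x\<^sub>1, x\<^sub>2\<close> by \<open>t x\<^sub>1, x\<^sub>2 / t\<close> and optimising over \<open>t\<close> improves this to \<open>c sqrt(q\<^sub>1 q\<^sub>2)\<close>.
  Finally \<open>p q\<^sub>1 + s q\<^sub>2 + c sqrt(q\<^sub>1 q\<^sub>2)\<close> with \<open>q\<^sub>1 + q\<^sub>2 = 1\<close> is at most the largest eigenvalue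
  of \<open>[[p, c/2], [c/2, s]]\<close>, which in turn is at most \<open>max p s + c / 2\<close>.

  Since \<open>\<omega>\<^sub>A\<close> is a supremum of reals, all of this needs \<open>\<omega>\<^sub>A(T) < \<infinity>\<close> for \<open>T \<in> B\<^sub>A(H)\<close>.
  The range condition gives \<open>T\<^sup>* A = A W\<close>; Douglas' lemma, proved via the uniform boundedness
  principle, gives \<open>\<parallel>A T z\<parallel> \<le> c \<parallel>A z\<parallel>\<close>; and log-convexity of \<open>n \<mapsto> \<parallel>S\<^sup>n x\<parallel>\<^sub>A\<^sup>2\<close> for the
  \<open>A\<close>-symmetric operator \<open>S = W T\<close> turns this into \<open>\<parallel>T x\<parallel>\<^sub>A \<le> L \<parallel>x\<parallel>\<^sub>A\<close>.
\<close>

lemma cinner_add_right: "cinner x (y + z) = cinner x y + cinner x (z::'a::complex_inner)"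
  by (metis cinner_conj cinner_add_left complex_cnj_add)

lemma cinner_cscale_right: "cinner x (cscale c y) = cnj c * cinner x (y::'a::complex_inner)"
  by (metis cinner_conj cinner_cscale_left complex_cnj_mult complex_cnj_cnj)

lemma cinner_zero_left [simp]: "cinner 0 (y::'a::complex_inner) = 0"
  by (metis add_cancel_right_right add_0 cinner_add_left)

lemma cinner_zero_right [simp]: "cinner y (0::'a::complex_inner) = 0"
  by (metis cinner_conj cinner_zero_left complex_cnj_zero)

lemma cinner_scaleR_left: "cinner (scaleR r x) (y::'a::complex_inner) = of_real r * cinner x y"
  by (metis cinner_cscale_left cscale_of_real)

lemma cinner_scaleR_right: "cinner x (scaleR r y) = of_real r * cinner x (y::'a::complex_inner)"
  by (metis cinner_cscale_right cscale_of_real complex_cnj_complex_of_real)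

lemma cinner_diff_left: "cinner (x - y) (z::'a::complex_inner) = cinner x z - cinner y z"
  using cinner_add_left[of "x - y" y z] by simp

lemma cinner_diff_right: "cinner x (y - z::'a::complex_inner) = cinner x y - cinner x z"
  using cinner_add_right[of x "y - z" z] by simp

lemma cinner_self_eq_norm_square: "cinner x x = of_real ((norm (x::'a::complex_inner))\<^sup>2)"
proof -
  have "Im (cinner x x) = 0"
    by (metis cinner_conj cnj.simps(2) neg_equal_zero)
  then show ?thesis
    using norm_eq_sqrt_cinner[of x] cinner_ge_zero[of x] by (simp add: complex_eq_iff)
qed

lemma Re_cinner_self_eq_norm_square: "Re (cinner x x) = (norm (x::'a::complex_inner))\<^sup>2"
  by (simp add: cinner_self_eq_norm_square)

lemma cinner_right_cancel:
  assumes "\<And>x. cinner x y = cinner x (z::'a::complex_inner)"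
  shows "y = z"
proof -
  have "cinner (y - z) y = cinner (y - z) z"
    by (rule assms)
  then have "cinner (y - z) (y - z) = 0"
    by (simp add: cinner_diff_right)
  then have "y - z = 0"
    by (simp only: cinner_eq_zero_iff)
  then show ?thesis
    by simp
qed

lemma cscale_diff_right: "cscale c (x - y::'a::complex_inner) = cscale c x - cscale c y"
proof -
  have "cscale c (x - y) + cscale c y = cscale c x"
    using cscale_add_right[of c "x - y" y] by simp
  then show ?thesis
    by (simp add: eq_diff_eq)
qed

lemma parallelogram_law:
  "(norm (x + y))\<^sup>2 + (norm (x - y))\<^sup>2 = 2 * (norm x)\<^sup>2 + 2 * (norm (y::'a::complex_inner))\<^sup>2"
proof -
  have "cinner (x + y) (x + y) + cinner (x - y) (x - y) = 2 * cinner x x + 2 * cinner y y"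
    by (simp add: cinner_diff_left cinner_diff_right cinner_add_left cinner_add_right algebra_simps)
  then have "complex_of_real ((norm (x + y))\<^sup>2 + (norm (x - y))\<^sup>2)
      = complex_of_real (2 * (norm x)\<^sup>2 + 2 * (norm y)\<^sup>2)"
    by (simp add: cinner_self_eq_norm_square)
  then show ?thesis
    by (simp only: of_real_eq_iff)
qed

lemma quadratic_nonneg_imp_discriminant_le:
  fixes a b k :: real
  assumes b: "0 \<le> b" and nonneg: "\<And>t. 0 \<le> a + 2 * k * t + b * t\<^sup>2"
  shows "k\<^sup>2 \<le> a * b"
proof (cases "b = 0")
  case True
  have "k = 0"
  proof (rule ccontr)
    assume "k \<noteq> 0"
    then have "0 \<le> a + 2 * k * (- (a + 1) / (2 * k))"
      using nonneg[of "- (a + 1) / (2 * k)"] True by simp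
    also have "\<dots> = -1"
      using \<open>k \<noteq> 0\<close> by (simp add: field_simps)
    finally show False
      by simp
  qed
  then show ?thesis
    using True by simp
next
  case False
  then have "0 < b"
    using b by simp
  have "0 \<le> a + 2 * k * (- k / b) + b * (- k / b)\<^sup>2"
    by (rule nonneg)
  also have "\<dots> = a - k\<^sup>2 / b"
    using \<open>0 < b\<close> by (simp add: field_simps power2_eq_square)
  finally show ?thesis
    using \<open>0 < b\<close> by (simp add: field_simps)
qed

lemma hermitian_form_Cauchy_Schwarz:
  fixes s :: "'a::complex_inner \<Rightarrow> 'a \<Rightarrow> complex"
  assumes add: "\<And>x y z. s (x + y) z = s x z + s y z"
    and scale: "\<And>c x y. s (cscale c x) y = c * s x y"
    and herm: "\<And>x y. s x y = cnj (s y x)"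
    and pos: "\<And>x. 0 \<le> Re (s x x)"
  shows "(cmod (s x y))\<^sup>2 \<le> Re (s x x) * Re (s y y)"
proof -
  define \<beta> where "\<beta> = s x y"
  define n where "n = (cmod \<beta>)\<^sup>2"
  have add_right: "s x (y + z) = s x y + s x z" for x y z
    by (metis add herm complex_cnj_add)
  have scale_right: "s x (cscale c y) = cnj c * s x y" for c x y
    by (metis scale herm complex_cnj_mult complex_cnj_cnj)
  have "0 \<le> Re (s x x) + 2 * n * t + (n * Re (s y y)) * t\<^sup>2" for t
  proof -
    define u where "u = of_real t * \<beta>"
    have "s (x + cscale u y) (x + cscale u y)
        = s x x + (cnj u * \<beta> + cnj (cnj u * \<beta>)) + u * cnj u * s y y"
      unfolding \<beta>_def using herm[of y x] by (simp add: add add_right scale scale_right algebra_simps)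
    moreover have "cnj u * \<beta> = of_real (t * n)" "u * cnj u = of_real (t\<^sup>2 * n)"
      unfolding u_def n_def of_real_mult complex_norm_square by (simp_all add: power2_eq_square)
    ultimately have "s (x + cscale u y) (x + cscale u y)
        = s x x + of_real (2 * n * t) + of_real (t\<^sup>2 * n) * s y y"
      by simp
    then have "Re (s (x + cscale u y) (x + cscale u y))
        = Re (s x x) + 2 * n * t + (n * Re (s y y)) * t\<^sup>2"
      by simp
    then show ?thesis
      by (metis pos)
  qed
  then have "n\<^sup>2 \<le> Re (s x x) * (n * Re (s y y))"
    by (intro quadratic_nonneg_imp_discriminant_le) (simp_all add: pos n_def)
  then have "n * n \<le> n * (Re (s x x) * Re (s y y))"
    by (simp add: power2_eq_square algebra_simps)
  moreover have "0 \<le> Re (s x x) * Re (s y y)"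
    using pos by simp
  moreover have "0 \<le> n"
    by (simp add: n_def)
  ultimately have "n \<le> Re (s x x) * Re (s y y)"
    by (cases "n = 0") (auto simp: mult_le_cancel_left_pos)
  then show ?thesis
    by (simp add: n_def \<beta>_def)
qed

lemma cinner_Cauchy_Schwarz: "cmod (cinner x y) \<le> norm x * norm (y::'a::complex_inner)"
proof -
  have "(cmod (cinner x y))\<^sup>2 \<le> Re (cinner x x) * Re (cinner y y)"
    by (rule hermitian_form_Cauchy_Schwarz)
      (auto simp: cinner_add_left cinner_cscale_left intro: cinner_conj cinner_ge_zero)
  also have "\<dots> = (norm x * norm y)\<^sup>2"
    by (simp add: cinner_self_eq_norm_square power_mult_distrib)
  finally show ?thesis
    by (simp add: power2_le_iff_abs_le)
qed

lemma bounded_linear_cinner_left: "bounded_linear (\<lambda>x. cinner x (y::'a::complex_inner))"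
proof (rule bounded_linear_intro[where K = "norm y"])
  show "cinner (x + z) y = cinner x y + cinner z y" for x z
    by (rule cinner_add_left)
  show "cinner (scaleR r x) y = scaleR r (cinner x y)" for r x
    by (simp add: cinner_scaleR_left scaleR_conv_of_real)
  show "norm (cinner x y) \<le> norm x * norm y" for x
    by (rule cinner_Cauchy_Schwarz)
qed

lemma bounded_linear_cinner_right: "bounded_linear (\<lambda>y. cinner (x::'a::complex_inner) y)"
proof (rule bounded_linear_intro[where K = "norm x"])
  show "cinner x (y + z) = cinner x y + cinner x z" for y z
    by (rule cinner_add_right)
  show "cinner x (scaleR r y) = scaleR r (cinner x y)" for r y
    by (simp add: cinner_scaleR_right scaleR_conv_of_real)
  show "norm (cinner x y) \<le> norm y * norm x" for y
    using cinner_Cauchy_Schwarz[of x y] by (simp add: mult.commute)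
qed

section \<open>Riesz representation and adjoints\<close>

lemma midpoint_convex_minimizing_sequence_Cauchy:
  fixes xs :: "nat \<Rightarrow> 'a::complex_inner"
  assumes mid: "\<And>x y. x \<in> M \<Longrightarrow> y \<in> M \<Longrightarrow> scaleR (1/2) (x + y) \<in> M"
    and lower: "\<And>x. x \<in> M \<Longrightarrow> d \<le> norm x"
    and xs: "\<And>n. xs n \<in> M" and lim: "(\<lambda>n. norm (xs n)) \<longlonglongrightarrow> d"
  shows "Cauchy xs"
proof (rule metric_CauchyI)
  fix e :: real
  assume "0 < e"
  have "(\<lambda>n. (norm (xs n))\<^sup>2) \<longlonglongrightarrow> d\<^sup>2"
    using lim by (rule tendsto_power)
  then have "eventually (\<lambda>n. (norm (xs n))\<^sup>2 < d\<^sup>2 + e\<^sup>2 / 4) sequentially"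
    by (rule order_tendstoD(2)) (use \<open>0 < e\<close> in simp)
  then obtain N where N: "\<And>n. N \<le> n \<Longrightarrow> (norm (xs n))\<^sup>2 < d\<^sup>2 + e\<^sup>2 / 4"
    unfolding eventually_sequentially by blast
  have "0 \<le> d"
    using lower[OF xs[of 0]] lim by (meson LIMSEQ_le_const norm_ge_zero)
  have "dist (xs m) (xs n) < e" if "N \<le> m" "N \<le> n" for m n
  proof -
    have "d \<le> norm (scaleR (1/2) (xs m + xs n))"
      using lower mid xs by blast
    then have "4 * d\<^sup>2 \<le> (norm (xs m + xs n))\<^sup>2"
      using \<open>0 \<le> d\<close> power_mono[of "2 * d" "norm (xs m + xs n)" 2]
      by (simp add: power_mult_distrib)
    then have "(norm (xs m - xs n))\<^sup>2 < e\<^sup>2"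
      using parallelogram_law[of "xs m" "xs n"] N[OF that(1)] N[OF that(2)] by linarith
    then have "norm (xs m - xs n) < e"
      using \<open>0 < e\<close> by (simp add: power_less_imp_less_base)
    then show ?thesis
      by (simp add: dist_norm)
  qed
  then show "\<exists>N. \<forall>m\<ge>N. \<forall>n\<ge>N. dist (xs m) (xs n) < e"
    by blast
qed

lemma hyperplane_min_norm_point_exists:
  fixes f :: "'a::chilbert_space \<Rightarrow> complex"
  assumes f: "bounded_linear f" and u: "f u = 1"
  shows "\<exists>y. f y = 1 \<and> (\<forall>x. f x = 1 \<longrightarrow> norm y \<le> norm x)"
proof -
  define M where "M = {x. f x = 1}"
  define d where "d = Inf (norm ` M)"
  have bdd: "bdd_below (norm ` M)"
    by (rule bdd_belowI[of _ 0]) auto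
  have lower: "d \<le> norm x" if "x \<in> M" for x
    unfolding d_def using bdd that by (simp add: cInf_lower)
  have "d \<in> closure (norm ` M)"
    unfolding d_def using u bdd by (intro closure_contains_Inf) (auto simp: M_def)
  then obtain ns where ns: "\<forall>n. ns n \<in> norm ` M" and ns_lim: "ns \<longlonglongrightarrow> d"
    unfolding closure_sequential by blast
  obtain xs where xs: "\<And>n. xs n \<in> M" and ns_eq: "\<And>n. ns n = norm (xs n)"
  proof -
    have "\<forall>n. \<exists>x. x \<in> M \<and> ns n = norm x"
      using ns by blast
    then show ?thesis
      using that by metis
  qed
  have "(\<lambda>n. norm (xs n)) = ns"
    using ns_eq by auto
  then have lim: "(\<lambda>n. norm (xs n)) \<longlonglongrightarrow> d"
    using ns_lim by simp
  have mid: "scaleR (1/2) (x + y) \<in> M" if "x \<in> M" "y \<in> M" for x y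
    using that f by (simp add: M_def linear_simps scaleR_conv_of_real)
  obtain y where y: "xs \<longlonglongrightarrow> y"
    using midpoint_convex_minimizing_sequence_Cauchy[OF mid lower xs lim]
    by (auto simp: Cauchy_convergent_iff convergent_def)
  have "(\<lambda>n. f (xs n)) \<longlonglongrightarrow> f y"
    using f y by (rule bounded_linear.tendsto)
  moreover have "(\<lambda>n. f (xs n)) = (\<lambda>n. 1)"
    using xs by (simp add: M_def)
  ultimately have "f y = 1"
    using LIMSEQ_unique tendsto_const by metis
  moreover have "norm y = d"
    using tendsto_norm[OF y] lim by (rule LIMSEQ_unique)
  ultimately show ?thesis
    using lower by (auto simp: M_def)
qed

lemma min_norm_imp_orthogonal:
  fixes y v :: "'a::complex_inner"
  assumes min: "\<And>t::real. norm y \<le> norm (y + scaleR t v)"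
  shows "Re (cinner v y) = 0"
proof -
  have "0 \<le> 0 + 2 * Re (cinner v y) * t + (norm v)\<^sup>2 * t\<^sup>2" for t
  proof -
    have "cinner (y + scaleR t v) (y + scaleR t v)
        = cinner y y + of_real t * (cinner v y + cnj (cinner v y)) + of_real (t\<^sup>2) * cinner v v"
      using cinner_conj[of y v]
      by (simp add: cinner_add_left cinner_add_right cinner_scaleR_left cinner_scaleR_right
          algebra_simps power2_eq_square)
    then have "Re (cinner (y + scaleR t v) (y + scaleR t v))
        = Re (cinner y y) + 2 * Re (cinner v y) * t + Re (cinner v v) * t\<^sup>2"
      by (simp add: complex_add_cnj)
    then have "(norm (y + scaleR t v))\<^sup>2 = (norm y)\<^sup>2 + 2 * Re (cinner v y) * t + (norm v)\<^sup>2 * t\<^sup>2"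
      by (simp only: Re_cinner_self_eq_norm_square)
    moreover have "(norm y)\<^sup>2 \<le> (norm (y + scaleR t v))\<^sup>2"
      using min by (simp add: power_mono)
    ultimately show ?thesis
      by simp
  qed
  then have "(Re (cinner v y))\<^sup>2 \<le> 0 * (norm v)\<^sup>2"
    by (intro quadratic_nonneg_imp_discriminant_le) simp_all
  then show ?thesis
    by simp
qed

lemma riesz_representation:
  fixes f :: "'a::chilbert_space \<Rightarrow> complex"
  assumes f: "bounded_linear f" and f_cscale: "\<And>c x. f (cscale c x) = c * f x"
  shows "\<exists>z. \<forall>x. f x = cinner x z"
proof (cases "\<forall>x. f x = 0")
  case True
  then show ?thesis
    by (intro exI[of _ 0]) simp
next
  case False
  then obtain u where "f u \<noteq> 0"
    by blast
  then have "f (cscale (1 / f u) u) = 1"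
    by (simp add: f_cscale)
  then obtain y where y: "f y = 1" and min: "\<And>x. f x = 1 \<Longrightarrow> norm y \<le> norm x"
    using hyperplane_min_norm_point_exists[OF f] by blast
  have f_simps: "f (x + z) = f x + f z" "f (x - z) = f x - f z" "f (scaleR r x) = of_real r * f x"
    for x z r
    using f by (simp_all add: linear_simps scaleR_conv_of_real)
  have kernel_orthogonal: "cinner k y = 0" if "f k = 0" for k
  proof -
    have Re_zero: "Re (cinner v y) = 0" if "f v = 0" for v
      by (rule min_norm_imp_orthogonal) (use that y in \<open>simp add: min f_simps\<close>)
    show ?thesis
      using Re_zero[of k] Re_zero[of "cscale \<i> k"] that
      by (simp add: f_cscale cinner_cscale_left complex_eq_iff)
  qed
  have "y \<noteq> 0"
    using y f_simps(2)[of y y] by auto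
  then have n: "cinner y y \<noteq> 0"
    using cinner_eq_zero_iff by blast
  show ?thesis
  proof (intro exI allI)
    fix x
    have "f (x - cscale (f x) y) = 0"
      using y by (simp add: f_simps f_cscale)
    then have "cinner (x - cscale (f x) y) y = 0"
      by (rule kernel_orthogonal)
    then have "cinner x y = f x * cinner y y"
      by (simp add: cinner_diff_left cinner_cscale_left)
    then show "f x = cinner x (cscale (cnj (1 / cinner y y)) y)"
      using n by (simp add: cinner_cscale_right)
  qed
qed

lemma cinner_cadjoint:
  fixes T :: "'a::chilbert_space \<Rightarrow> 'a"
  assumes T: "bounded_clinear_op T"
  shows "cinner (T x) y = cinner x (cadjoint T y)"
proof -
  have "\<exists>z. \<forall>x. cinner (T x) y = cinner x z" for y
  proof (rule riesz_representation)
    show "bounded_linear (\<lambda>x. cinner (T x) y)"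
      using T unfolding bounded_clinear_op_def
      by (auto intro: bounded_linear_compose[OF bounded_linear_cinner_left])
    show "cinner (T (cscale c x)) y = c * cinner (T x) y" for c x
      using T by (simp add: bounded_clinear_op_def cinner_cscale_left)
  qed
  then obtain S where S: "\<And>x y. cinner (T x) y = cinner x (S y)"
    by metis
  have "cadjoint T = S"
    unfolding cadjoint_def
  proof (rule the_equality)
    show "\<forall>x y. cinner (T x) y = cinner x (S y)"
      using S by blast
    show "S' = S" if S': "\<forall>x y. cinner (T x) y = cinner x (S' y)" for S'
    proof
      fix y
      show "S' y = S y"
        by (rule cinner_right_cancel) (metis S S')
    qed
  qed
  then show ?thesis
    using S by simp
qed

lemma adjoint_norm_le:
  fixes T T' :: "'a::complex_inner \<Rightarrow> 'a"
  assumes adj: "\<And>x y. cinner (T x) y = cinner x (T' y)"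
    and K: "0 \<le> K" "\<And>x. norm (T x) \<le> K * norm x"
  shows "norm (T' y) \<le> K * norm y"
proof (cases "T' y = 0")
  case True
  then show ?thesis
    using K by simp
next
  case False
  have "(norm (T' y))\<^sup>2 = cmod (cinner (T (T' y)) y)"
    by (simp add: adj cinner_self_eq_norm_square norm_power del: of_real_power)
  also have "\<dots> \<le> norm (T (T' y)) * norm y"
    by (rule cinner_Cauchy_Schwarz)
  also have "\<dots> \<le> (K * norm (T' y)) * norm y"
    using K(2) by (rule mult_right_mono) simp
  finally have "norm (T' y) * norm (T' y) \<le> norm (T' y) * (K * norm y)"
    by (simp add: power2_eq_square algebra_simps)
  then show ?thesis
    using False by simp
qed

lemma bounded_clinear_op_simps:
  assumes "bounded_clinear_op T"
  shows "T (x + y) = T x + T y" "T (x - y) = T x - T y" "T (cscale c x) = cscale c (T x)"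
    "T (scaleR r x) = scaleR r (T x)" "T 0 = 0"
  using assms by (auto simp: bounded_clinear_op_def linear_simps)

lemma bounded_clinear_op_add:
  assumes "bounded_clinear_op Q" "bounded_clinear_op R"
  shows "bounded_clinear_op (\<lambda>x. Q x + R x)"
  using assms by (auto simp: bounded_clinear_op_def cscale_add_right intro: bounded_linear_add)

lemma bounded_clinear_op_diff:
  assumes "bounded_clinear_op Q" "bounded_clinear_op R"
  shows "bounded_clinear_op (\<lambda>x. Q x - R x)"
  using assms by (auto simp: bounded_clinear_op_def cscale_diff_right intro: bounded_linear_sub)

lemma positive_op_form_nonneg: "positive_op A \<Longrightarrow> 0 \<le> Re (cinner (A x) x)"
  by (simp add: positive_op_def)

lemma positive_op_form_real: "positive_op A \<Longrightarrow> cinner (A x) x = of_real (Re (cinner (A x) x))"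
  by (simp add: positive_op_def complex_eq_iff)

lemma positive_op_self_adjoint:
  fixes A :: "'a::complex_inner \<Rightarrow> 'a"
  assumes A: "positive_op A"
  shows "cinner (A x) y = cinner x (A y)"
proof -
  have lin: "bounded_clinear_op A"
    using A by (simp add: positive_op_def)
  have real: "Im (cinner (A v) v) = 0" for v
    using A by (simp add: positive_op_def)
  define a where "a = cinner (A x) y"
  define b where "b = cinner (A y) x"
  have "cinner (A (x + y)) (x + y) = cinner (A x) x + cinner (A y) y + a + b"
    by (simp add: bounded_clinear_op_simps[OF lin] cinner_add_left cinner_add_right a_def b_def)
  then have Im: "Im (a + b) = 0"
    using real[of "x + y"] real[of x] real[of y] by simp
  have "cinner (A (cscale \<i> y)) (cscale \<i> y) = cinner (A y) y"
    by (simp add: bounded_clinear_op_simps[OF lin] cinner_cscale_left cinner_cscale_right)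
  then have "cinner (A (x + cscale \<i> y)) (x + cscale \<i> y)
      = cinner (A x) x + cinner (A y) y - \<i> * a + \<i> * b"
    by (simp add: bounded_clinear_op_simps[OF lin] cinner_add_left cinner_add_right
        cinner_cscale_left cinner_cscale_right a_def b_def algebra_simps)
  then have Re: "Re (b - a) = 0"
    using real[of "x + cscale \<i> y"] real[of x] real[of y] by simp
  have "b = cnj a"
    using Im Re by (simp add: complex_eq_iff)
  then show ?thesis
    unfolding a_def b_def by (metis cinner_conj complex_cnj_cnj)
qed

lemma positive_op_Cauchy_Schwarz:
  fixes A :: "'a::complex_inner \<Rightarrow> 'a"
  assumes A: "positive_op A"
  shows "(cmod (cinner (A x) y))\<^sup>2 \<le> Re (cinner (A x) x) * Re (cinner (A y) y)"
proof (rule hermitian_form_Cauchy_Schwarz)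
  have lin: "bounded_clinear_op A"
    using A by (simp add: positive_op_def)
  show "cinner (A (x + y)) z = cinner (A x) z + cinner (A y) z" for x y z
    by (simp add: bounded_clinear_op_simps[OF lin] cinner_add_left)
  show "cinner (A (cscale c x)) y = c * cinner (A x) y" for c x y
    by (simp add: bounded_clinear_op_simps[OF lin] cinner_cscale_left)
  show "cinner (A x) y = cnj (cinner (A y) x)" for x y
    using positive_op_self_adjoint[OF A] by (metis cinner_conj)
  show "0 \<le> Re (cinner (A x) x)" for x
    using A by (rule positive_op_form_nonneg)
qed

lemma positive_op_form_pos:
  fixes A :: "'a::complex_inner \<Rightarrow> 'a"
  assumes A: "positive_op A" and "A x \<noteq> 0"
  shows "0 < Re (cinner (A x) x)"
proof (rule ccontr)
  assume "\<not> 0 < Re (cinner (A x) x)"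
  then have "Re (cinner (A x) x) = 0"
    using positive_op_form_nonneg[OF A, of x] by simp
  then have "(cmod (cinner (A x) (A x)))\<^sup>2 \<le> 0"
    using positive_op_Cauchy_Schwarz[OF A, of x "A x"] by simp
  then show False
    using \<open>A x \<noteq> 0\<close> cinner_eq_zero_iff by auto
qed

lemma cinner_A_scaleR:
  assumes "bounded_clinear_op A"
  shows "cinner (A (scaleR r x)) (scaleR s y) = of_real (r * s) * cinner (A x) y"
  by (simp add: bounded_clinear_op_simps[OF assms] cinner_scaleR_left cinner_scaleR_right)

lemma A_inner_normalize:
  fixes A :: "'a::complex_inner \<Rightarrow> 'a"
  assumes A: "positive_op A" and q: "0 < Re (cinner (A x) x)"
  defines "z \<equiv> scaleR (1 / sqrt (Re (cinner (A x) x))) x"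
  shows "A_inner A z z = 1"
proof -
  have lin: "bounded_clinear_op A"
    using A by (simp add: positive_op_def)
  have "A_inner A z z = of_real (1 / Re (cinner (A x) x)) * cinner (A x) x"
    using q by (simp add: A_inner_def z_def cinner_A_scaleR[OF lin])
  moreover have "cinner (A x) x \<noteq> 0"
    using q by auto
  ultimately show ?thesis
    using positive_op_form_real[OF A, of x] by simp
qed

lemma A_unit_vector_exists:
  fixes A :: "'a::complex_inner \<Rightarrow> 'a"
  assumes A: "positive_op A" and "A \<noteq> (\<lambda>x. 0)"
  shows "\<exists>u. A_inner A u u = 1"
proof -
  obtain x where "A x \<noteq> 0"
    using assms(2) by blast
  then show ?thesis
    using A_inner_normalize[OF A positive_op_form_pos[OF A]] by blast
qed

section \<open>Douglas majorization\<close>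

lemma seminorm_le_of_bounded_on_ball:
  fixes \<phi> :: "'a::real_normed_vector \<Rightarrow> real"
  assumes tri: "\<And>x y. \<phi> (x + y) \<le> \<phi> x + \<phi> y"
    and hom: "\<And>r x. \<phi> (scaleR r x) = \<bar>r\<bar> * \<phi> x"
    and r: "0 < r" and ball: "\<And>x. x \<in> ball x0 r \<Longrightarrow> \<phi> x \<le> B"
  shows "\<phi> x \<le> (4 * B / r) * norm x"
proof (cases "x = 0")
  case True
  then show ?thesis
    using hom[of 0 0] by simp
next
  case False
  have small: "\<phi> u \<le> 2 * B" if "norm u < r" for u
  proof -
    have "\<phi> u \<le> \<phi> (x0 + u) + \<phi> (- x0)"
      using tri[of "x0 + u" "- x0"] by simp
    moreover have "\<phi> (- x0) = \<phi> x0"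
      using hom[of "-1" x0] by simp
    moreover have "\<phi> (x0 + u) \<le> B" "\<phi> x0 \<le> B"
      using ball that r by (auto simp: dist_norm)
    ultimately show ?thesis
      by linarith
  qed
  have "norm (scaleR (r / (2 * norm x)) x) < r"
    using False r by simp
  then have "r / (2 * norm x) * \<phi> x \<le> 2 * B"
    using small[of "scaleR (r / (2 * norm x)) x"] hom r by simp
  then show ?thesis
    using False r by (simp add: field_simps)
qed

lemma closed_cover_has_interior:
  fixes F :: "nat \<Rightarrow> 'a::complete_space set"
  assumes closed: "\<And>n. closed (F n)" and cover: "\<Union>(range F) = UNIV"
  shows "\<exists>n. interior (F n) \<noteq> {}"
proof (rule ccontr)
  assume "\<not> ?thesis"
  then have no_interior: "interior (F n) = {}" for n
    by blast
  have "euclidean interior_of \<Union>(range F) = {}"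
  proof (rule Baire_category_alt)
    show "completely_metrizable_space (euclidean :: 'a topology)
        \<or> locally_compact_space (euclidean :: 'a topology) \<and> regular_space (euclidean :: 'a topology)"
      using completely_metrizable_space_euclidean by blast
    show "countable (range F)"
      by simp
    show "closedin euclidean T \<and> euclidean interior_of T = {}" if "T \<in> range F" for T
      using that closed no_interior closed_closedin by auto
  qed
  then show False
    using cover by simp
qed

lemma uniform_boundedness_seminorms:
  fixes \<phi> :: "'i \<Rightarrow> 'a::{real_normed_vector, complete_space} \<Rightarrow> real"
  assumes cont: "\<And>i. continuous_on UNIV (\<phi> i)"
    and tri: "\<And>i x y. \<phi> i (x + y) \<le> \<phi> i x + \<phi> i y"
    and hom: "\<And>i r x. \<phi> i (scaleR r x) = \<bar>r\<bar> * \<phi> i x"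
    and pointwise: "\<And>x. \<exists>B. \<forall>i\<in>I. \<phi> i x \<le> B"
  shows "\<exists>C. \<forall>i\<in>I. \<forall>x. \<phi> i x \<le> C * norm x"
proof -
  define F where "F n = {x. \<forall>i\<in>I. \<phi> i x \<le> real n}" for n :: nat
  have closed: "closed (F n)" for n
  proof -
    have "F n = (\<Inter>i\<in>I. {x. \<phi> i x \<le> real n})"
      by (auto simp: F_def)
    moreover have "closed {x. \<phi> i x \<le> real n}" for i
      using cont[of i] by (intro closed_Collect_le) (auto intro: continuous_on_const)
    ultimately show ?thesis
      by auto
  qed
  have cover: "\<Union>(range F) = UNIV"
  proof safe
    fix x
    obtain B where "\<forall>i\<in>I. \<phi> i x \<le> B"
      using pointwise by blast
    moreover obtain n where "B \<le> real n"
      using real_arch_simple by blast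
    ultimately have "x \<in> F n"
      by (force simp: F_def)
    then show "x \<in> \<Union>(range F)"
      by blast
  qed auto
  have "\<exists>n. interior (F n) \<noteq> {}"
    using closed cover by (rule closed_cover_has_interior)
  then obtain n x0 where "x0 \<in> interior (F n)"
    by blast
  then obtain r where "0 < r" "ball x0 r \<subseteq> F n"
    using mem_interior by blast
  then have "\<phi> i x \<le> (4 * real n / r) * norm x" if "i \<in> I" for i x
    using that by (intro seminorm_le_of_bounded_on_ball[OF tri hom]) (auto simp: F_def)
  then show ?thesis
    by blast
qed

lemma douglas_unit_ball_bound:
  fixes A B w :: "'a::chilbert_space \<Rightarrow> 'a"
  assumes range: "\<And>z y. cinner (B z) y = cinner (A z) (w y)"
  shows "\<exists>c\<ge>0. \<forall>z. norm (A z) \<le> 1 \<longrightarrow> norm (B z) \<le> c"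
proof -
  define \<phi> where "\<phi> z y = cmod (cinner (B z) y)" for z y
  have "\<exists>C. \<forall>z\<in>{z. norm (A z) \<le> 1}. \<forall>y. \<phi> z y \<le> C * norm y"
  proof (rule uniform_boundedness_seminorms)
    show "continuous_on UNIV (\<phi> z)" for z
      unfolding \<phi>_def by (intro continuous_on_norm linear_continuous_on bounded_linear_cinner_right)
    show "\<phi> z (x + y) \<le> \<phi> z x + \<phi> z y" for z x y
      unfolding \<phi>_def by (simp add: cinner_add_right norm_triangle_ineq)
    show "\<phi> z (scaleR r x) = \<bar>r\<bar> * \<phi> z x" for z r x
      unfolding \<phi>_def by (simp add: cinner_scaleR_right norm_mult)
    show "\<exists>C. \<forall>z\<in>{z. norm (A z) \<le> 1}. \<phi> z y \<le> C" for y
    proof (intro exI ballI)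
      fix z
      assume "z \<in> {z. norm (A z) \<le> 1}"
      then have "norm (A z) * norm (w y) \<le> norm (w y)"
        by (simp add: mult_left_le_one_le)
      then show "\<phi> z y \<le> norm (w y)"
        unfolding \<phi>_def range using cinner_Cauchy_Schwarz[of "A z" "w y"] by linarith
    qed
  qed
  then obtain C where C: "\<And>z y. norm (A z) \<le> 1 \<Longrightarrow> \<phi> z y \<le> C * norm y"
    by blast
  have "norm (B z) \<le> max C 0" if "norm (A z) \<le> 1" for z
  proof -
    have "norm (B z) * norm (B z) = \<phi> z (B z)"
      by (simp add: \<phi>_def cinner_self_eq_norm_square power2_eq_square norm_mult)
    also have "\<dots> \<le> max C 0 * norm (B z)"
      using C[OF that, of "B z"] by (simp add: max_mult_distrib_right)
    finally show ?thesis
      by (cases "B z = 0") simp_all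
  qed
  then show ?thesis
    by (intro exI[of _ "max C 0"]) auto
qed

lemma douglas_majorization:
  fixes A B w :: "'a::chilbert_space \<Rightarrow> 'a"
  assumes A: "linear A" and B: "linear B"
    and range: "\<And>z y. cinner (B z) y = cinner (A z) (w y)"
  shows "\<exists>c\<ge>0. \<forall>z. norm (B z) \<le> c * norm (A z)"
proof -
  have "\<exists>c\<ge>0. \<forall>z. norm (A z) \<le> 1 \<longrightarrow> norm (B z) \<le> c"
    using range by (rule douglas_unit_ball_bound)
  then obtain c where "0 \<le> c" and unit: "\<And>z. norm (A z) \<le> 1 \<Longrightarrow> norm (B z) \<le> c"
    by blast
  have "norm (B z) \<le> c * norm (A z)" for z
  proof (cases "A z = 0")
    case True
    then have "cinner (B z) (B z) = 0"
      by (simp add: range)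
    then show ?thesis
      using True by (simp add: cinner_eq_zero_iff)
  next
    case False
    define s where "s = 1 / norm (A z)"
    have "0 < s"
      using False by (simp add: s_def)
    have "norm (A (scaleR s z)) \<le> 1"
      using False A by (simp add: s_def linear_scale)
    then have "s * norm (B z) \<le> c"
      using unit[of "scaleR s z"] \<open>0 < s\<close> B by (simp add: linear_scale)
    then show ?thesis
      using False by (simp add: s_def field_simps)
  qed
  with \<open>0 \<le> c\<close> show ?thesis
    by blast
qed

section \<open>Finiteness of the \<open>A\<close>-numerical radius on \<open>B\<^sub>A(H)\<close>\<close>

lemma log_convex_ratio_mono:
  fixes Q :: "nat \<Rightarrow> real"
  assumes nonneg: "\<And>n. 0 \<le> Q n"
    and log_convex: "\<And>n. (Q (Suc n))\<^sup>2 \<le> Q n * Q (Suc (Suc n))"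
  shows "Q n * Q 1 \<le> Q (Suc n) * Q 0"
proof (induction n)
  case 0
  then show ?case
    by (simp add: mult.commute)
next
  case (Suc n)
  show ?case
  proof (cases "Q n = 0")
    case True
    then have "Q (Suc n) = 0"
      using log_convex[of n] by simp
    then show ?thesis
      using nonneg by simp
  next
    case False
    then have "0 < Q n"
      using nonneg[of n] by simp
    have "Q n * (Q (Suc n) * Q 1) = Q (Suc n) * (Q n * Q 1)"
      by (simp add: algebra_simps)
    also have "\<dots> \<le> Q (Suc n) * (Q (Suc n) * Q 0)"
      by (rule mult_left_mono[OF Suc.IH nonneg])
    also have "\<dots> = (Q (Suc n))\<^sup>2 * Q 0"
      by (simp add: power2_eq_square algebra_simps)
    also have "\<dots> \<le> (Q n * Q (Suc (Suc n))) * Q 0"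
      by (rule mult_right_mono[OF log_convex nonneg])
    also have "\<dots> = Q n * (Q (Suc (Suc n)) * Q 0)"
      by (simp add: algebra_simps)
    finally show ?thesis
      using \<open>0 < Q n\<close> by (simp add: mult_le_cancel_left_pos)
  qed
qed

lemma log_convex_geometric_lower_bound:
  fixes Q :: "nat \<Rightarrow> real"
  assumes nonneg: "\<And>n. 0 \<le> Q n"
    and log_convex: "\<And>n. (Q (Suc n))\<^sup>2 \<le> Q n * Q (Suc (Suc n))" and "0 < Q 0"
  shows "Q 0 * (Q 1 / Q 0) ^ n \<le> Q n"
proof (induction n)
  case 0
  then show ?case
    by simp
next
  case (Suc n)
  have "Q 0 * (Q 1 / Q 0) ^ Suc n \<le> Q n * (Q 1 / Q 0)"
    using mult_right_mono[OF Suc.IH, of "Q 1 / Q 0"] nonneg by (simp add: mult_ac)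
  also have "\<dots> \<le> Q (Suc n)"
    using log_convex_ratio_mono[of Q, OF nonneg log_convex, of n] \<open>0 < Q 0\<close>
    by (simp add: field_simps)
  finally show ?case .
qed

lemma log_convex_growth_bound:
  fixes Q :: "nat \<Rightarrow> real"
  assumes nonneg: "\<And>n. 0 \<le> Q n"
    and log_convex: "\<And>n. (Q (Suc n))\<^sup>2 \<le> Q n * Q (Suc (Suc n))"
    and growth: "\<And>n. Q n \<le> C * r ^ n" and r: "0 \<le> r"
  shows "Q 1 \<le> r * Q 0"
proof (rule ccontr)
  assume "\<not> Q 1 \<le> r * Q 0"
  then have gt: "r * Q 0 < Q 1"
    by simp
  have "Q 0 \<noteq> 0"
  proof
    assume "Q 0 = 0"
    then have "Q 1 = 0"
      using log_convex[of 0] by simp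
    then show False
      using gt \<open>Q 0 = 0\<close> by simp
  qed
  then have "0 < Q 0"
    using nonneg[of 0] by simp
  define \<rho> where "\<rho> = Q 1 / Q 0"
  have "r < \<rho>"
    using gt \<open>0 < Q 0\<close> by (simp add: \<rho>_def field_simps)
  show False
  proof (cases "r = 0")
    case True
    then show False
      using growth[of 1] gt by simp
  next
    case False
    then have "1 < \<rho> / r"
      using r \<open>r < \<rho>\<close> by simp
    then obtain n where n: "C / Q 0 < (\<rho> / r) ^ n"
      using real_arch_pow by blast
    have "C * r ^ n < Q 0 * \<rho> ^ n"
      using n \<open>0 < Q 0\<close> r False by (simp add: power_divide field_simps)
    then show False
      using log_convex_geometric_lower_bound[OF nonneg log_convex \<open>0 < Q 0\<close>, of n] growth[of n]
      by (simp add: \<rho>_def)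
  qed
qed

text \<open>\<open>S\<close> realises \<open>T\<^sup>\<sharp> T\<close>, where \<open>T\<^sup>\<sharp>\<close> is the \<open>A\<close>-adjoint of \<open>T\<close>.\<close>
lemma A_sharp_symmetric:
  fixes A T T' S :: "'a::complex_inner \<Rightarrow> 'a"
  assumes A: "positive_op A" and adj: "\<And>x y. cinner (T x) y = cinner x (T' y)"
    and S: "\<And>y. A (S y) = T' (A (T y))"
  shows "cinner (A (S u)) v = cinner (A u) (S v)"
proof -
  have "cinner (A (S u)) v = cnj (cinner (T v) (A (T u)))"
    by (metis adj cinner_conj S)
  also have "\<dots> = cinner (T u) (A (T v))"
    by (metis cinner_conj positive_op_self_adjoint[OF A])
  also have "\<dots> = cinner (A u) (S v)"
    by (metis adj positive_op_self_adjoint[OF A] S)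
  finally show ?thesis .
qed

lemma cinner_A_funpow_shift:
  fixes A S :: "'a::complex_inner \<Rightarrow> 'a"
  assumes sym: "\<And>u v. cinner (A (S u)) v = cinner (A u) (S v)"
  shows "cinner (A ((S ^^ j) x)) ((S ^^ k) x) = cinner (A ((S ^^ (j + k)) x)) x"
proof (induction k arbitrary: j)
  case 0
  then show ?case
    by simp
next
  case (Suc k)
  have "cinner (A ((S ^^ j) x)) ((S ^^ Suc k) x) = cinner (A ((S ^^ Suc j) x)) ((S ^^ k) x)"
    by (simp add: sym)
  also have "\<dots> = cinner (A ((S ^^ (j + Suc k)) x)) x"
    using Suc.IH[of "Suc j"] by simp
  finally show ?case .
qed

lemma norm_A_funpow_le:
  fixes A S :: "'a::real_normed_vector \<Rightarrow> 'a"
  assumes S: "\<And>y. norm (A (S y)) \<le> L * norm (A y)" and "0 \<le> L"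
  shows "norm (A ((S ^^ n) x)) \<le> L ^ n * norm (A x)"
proof (induction n)
  case 0
  then show ?case
    by simp
next
  case (Suc n)
  have "norm (A ((S ^^ Suc n) x)) \<le> L * norm (A ((S ^^ n) x))"
    using S by simp
  also have "\<dots> \<le> L * (L ^ n * norm (A x))"
    using Suc.IH \<open>0 \<le> L\<close> by (rule mult_left_mono)
  finally show ?case
    by (simp add: mult.assoc)
qed

lemma A_form_le_of_A_symmetric:
  fixes A S :: "'a::complex_inner \<Rightarrow> 'a"
  assumes A: "positive_op A" and sym: "\<And>u v. cinner (A (S u)) v = cinner (A u) (S v)"
    and S: "\<And>y. norm (A (S y)) \<le> L * norm (A y)" and "0 \<le> L"
  shows "Re (cinner (A (S x)) (S x)) \<le> L\<^sup>2 * Re (cinner (A x) x)"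
proof -
  define Q where "Q n = Re (cinner (A ((S ^^ n) x)) ((S ^^ n) x))" for n
  have shift: "cinner (A ((S ^^ j) x)) ((S ^^ k) x) = cinner (A ((S ^^ (j + k)) x)) x" for j k
    using sym by (rule cinner_A_funpow_shift)
  have nonneg: "0 \<le> Q n" for n
    unfolding Q_def using A by (rule positive_op_form_nonneg)
  have log_convex: "(Q (Suc n))\<^sup>2 \<le> Q n * Q (Suc (Suc n))" for n
  proof -
    have "Q (Suc n) \<le> cmod (cinner (A ((S ^^ Suc (Suc n)) x)) ((S ^^ n) x))"
      using shift[of "Suc n" "Suc n"] shift[of "Suc (Suc n)" n]
      by (simp add: Q_def complex_Re_le_cmod)
    then have "(Q (Suc n))\<^sup>2 \<le> (cmod (cinner (A ((S ^^ Suc (Suc n)) x)) ((S ^^ n) x)))\<^sup>2"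
      using nonneg by (intro power_mono) auto
    also have "\<dots> \<le> Q (Suc (Suc n)) * Q n"
      unfolding Q_def by (rule positive_op_Cauchy_Schwarz[OF A])
    finally show ?thesis
      by (simp add: mult.commute)
  qed
  have growth: "Q n \<le> (norm (A x) * norm x) * (L\<^sup>2) ^ n" for n
  proof -
    have "Q n \<le> cmod (cinner (A ((S ^^ (n + n)) x)) x)"
      by (simp add: Q_def shift complex_Re_le_cmod)
    also have "\<dots> \<le> norm (A ((S ^^ (n + n)) x)) * norm x"
      by (rule cinner_Cauchy_Schwarz)
    also have "\<dots> \<le> (L ^ (n + n) * norm (A x)) * norm x"
      by (intro mult_right_mono norm_A_funpow_le[of A S, OF S \<open>0 \<le> L\<close>]) simp
    also have "L ^ (n + n) = (L\<^sup>2) ^ n"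
      by (metis mult_2 power_mult mult.commute)
    finally show ?thesis
      by (simp add: mult_ac)
  qed
  have "Q 1 \<le> L\<^sup>2 * Q 0"
    by (rule log_convex_growth_bound[OF nonneg log_convex growth]) simp
  then show ?thesis
    by (simp add: Q_def)
qed

lemma A_bounded_of_sharp:
  fixes A T S :: "'a::complex_inner \<Rightarrow> 'a"
  assumes A: "positive_op A" and TS: "cinner (A (T x)) (T x) = cinner (A x) (S x)"
    and S: "Re (cinner (A (S x)) (S x)) \<le> L\<^sup>2 * Re (cinner (A x) x)" and "0 \<le> L"
  shows "Re (cinner (A (T x)) (T x)) \<le> L * Re (cinner (A x) x)"
proof -
  define q where "q = Re (cinner (A x) x)"
  have "0 \<le> q"
    using A by (simp add: q_def positive_op_form_nonneg)
  have "Re (cinner (A (T x)) (T x)) \<le> cmod (cinner (A x) (S x))"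
    unfolding TS by (rule complex_Re_le_cmod)
  then have "(Re (cinner (A (T x)) (T x)))\<^sup>2 \<le> (cmod (cinner (A x) (S x)))\<^sup>2"
    by (rule power_mono) (rule positive_op_form_nonneg[OF A])
  also have "\<dots> \<le> q * Re (cinner (A (S x)) (S x))"
    unfolding q_def by (rule positive_op_Cauchy_Schwarz[OF A])
  also have "\<dots> \<le> q * (L\<^sup>2 * q)"
    using S \<open>0 \<le> q\<close> unfolding q_def by (rule mult_left_mono)
  also have "\<dots> = (L * q)\<^sup>2"
    by (simp add: power2_eq_square)
  finally show ?thesis
    using \<open>0 \<le> q\<close> \<open>0 \<le> L\<close> unfolding q_def[symmetric] by (auto intro: power2_le_imp_le)
qed

lemma A_bounded_of_adjoint_range:
  fixes A T T' w :: "'a::chilbert_space \<Rightarrow> 'a"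
  assumes A: "positive_op A" and T: "bounded_clinear_op T"
    and adj: "\<And>x y. cinner (T x) y = cinner x (T' y)"
    and w: "\<And>y. T' (A y) = A (w y)"
  shows "\<exists>L\<ge>0. \<forall>x. Re (cinner (A (T x)) (T x)) \<le> L * Re (cinner (A x) x)"
proof -
  have A_lin: "bounded_clinear_op A"
    using A by (simp add: positive_op_def)
  have "cinner (A (T z)) y = cinner (A z) (w y)" for z y
    by (metis A adj positive_op_self_adjoint w)
  then obtain c where "0 \<le> c" and AT: "\<And>z. norm (A (T z)) \<le> c * norm (A z)"
    using douglas_majorization[of A "\<lambda>z. A (T z)" w] A_lin T
    by (auto simp: bounded_clinear_op_def bounded_linear.linear linear_compose[unfolded o_def])
  obtain K where "0 \<le> K" and K: "\<And>x. norm (T x) \<le> K * norm x"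
    using T bounded_linear.nonneg_bounded[of T]
    by (auto simp: bounded_clinear_op_def mult.commute)
  have T': "norm (T' v) \<le> K * norm v" for v
    using adj \<open>0 \<le> K\<close> K by (rule adjoint_norm_le)
  define S where "S y = w (T y)" for y
  have S_sharp: "A (S y) = T' (A (T y))" for y
    by (simp add: S_def w)
  have S_norm: "norm (A (S y)) \<le> (K * c) * norm (A y)" for y
  proof -
    have "norm (A (S y)) \<le> K * norm (A (T y))"
      by (simp add: S_sharp T')
    also have "\<dots> \<le> K * (c * norm (A y))"
      using AT \<open>0 \<le> K\<close> by (rule mult_left_mono)
    finally show ?thesis
      by (simp add: mult.assoc)
  qed
  have "0 \<le> K * c"
    using \<open>0 \<le> K\<close> \<open>0 \<le> c\<close> by simp
  have "Re (cinner (A (T x)) (T x)) \<le> (K * c) * Re (cinner (A x) x)" for x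
  proof (rule A_bounded_of_sharp[OF A _ _ \<open>0 \<le> K * c\<close>])
    show "cinner (A (T x)) (T x) = cinner (A x) (S x)"
      by (metis A adj positive_op_self_adjoint S_sharp)
    show "Re (cinner (A (S x)) (S x)) \<le> (K * c)\<^sup>2 * Re (cinner (A x) x)"
      using A_sharp_symmetric[OF A adj S_sharp] S_norm \<open>0 \<le> K * c\<close>
      by (rule A_form_le_of_A_symmetric[OF A])
  qed
  with \<open>0 \<le> K * c\<close> show ?thesis
    by blast
qed

definition A_form_bounded :: "('a::complex_inner \<Rightarrow> 'a) \<Rightarrow> ('a \<Rightarrow> 'a) \<Rightarrow> bool" where
  "A_form_bounded A T \<longleftrightarrow> (\<exists>M. \<forall>x. cmod (cinner (A (T x)) x) \<le> M * Re (cinner (A x) x))"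

lemma A_form_bounded_of_A_bounded:
  fixes A T :: "'a::complex_inner \<Rightarrow> 'a"
  assumes A: "positive_op A" and "0 \<le> L"
    and L: "\<And>x. Re (cinner (A (T x)) (T x)) \<le> L * Re (cinner (A x) x)"
  shows "A_form_bounded A T"
  unfolding A_form_bounded_def
proof (intro exI allI)
  fix x
  define q where "q = Re (cinner (A x) x)"
  have "0 \<le> q"
    unfolding q_def using A by (rule positive_op_form_nonneg)
  have "(cmod (cinner (A (T x)) x))\<^sup>2 \<le> Re (cinner (A (T x)) (T x)) * q"
    unfolding q_def by (rule positive_op_Cauchy_Schwarz[OF A])
  also have "\<dots> \<le> (L * q) * q"
    using L[of x] \<open>0 \<le> q\<close> by (simp add: q_def mult_right_mono)
  also have "\<dots> = (sqrt L * q)\<^sup>2"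
    using \<open>0 \<le> L\<close> by (simp add: power2_eq_square)
  finally show "cmod (cinner (A (T x)) x) \<le> sqrt L * q"
    using \<open>0 \<le> q\<close> \<open>0 \<le> L\<close> by (auto intro: power2_le_imp_le)
qed

lemma BA_imp_A_form_bounded:
  fixes A T :: "'a::chilbert_space \<Rightarrow> 'a"
  assumes A: "positive_op A" and T: "T \<in> BA A"
  shows "A_form_bounded A T"
proof -
  have lin: "bounded_clinear_op T" and range: "range (cadjoint T \<circ> A) \<subseteq> range A"
    using T by (auto simp: BA_def)
  have "\<forall>y. \<exists>v. cadjoint T (A y) = A v"
    using range by (metis comp_apply rangeE range_subsetD)
  then obtain w where "\<And>y. cadjoint T (A y) = A (w y)"
    by metis
  then obtain L where "0 \<le> L" "\<And>x. Re (cinner (A (T x)) (T x)) \<le> L * Re (cinner (A x) x)"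
    using A_bounded_of_adjoint_range[OF A lin cinner_cadjoint[OF lin]] by blast
  then show ?thesis
    by (rule A_form_bounded_of_A_bounded[OF A])
qed

lemma A_form_bounded_add:
  assumes A: "positive_op A" and "A_form_bounded A Q" "A_form_bounded A R"
  shows "A_form_bounded A (\<lambda>x. Q x + R x)"
proof -
  obtain MQ MR where
    MQ: "\<And>x. cmod (cinner (A (Q x)) x) \<le> MQ * Re (cinner (A x) x)" and
    MR: "\<And>x. cmod (cinner (A (R x)) x) \<le> MR * Re (cinner (A x) x)"
    using assms(2,3) by (auto simp: A_form_bounded_def)
  have lin: "bounded_clinear_op A"
    using A by (simp add: positive_op_def)
  have "cmod (cinner (A (Q x + R x)) x) \<le> (MQ + MR) * Re (cinner (A x) x)" for x
    using norm_triangle_ineq[of "cinner (A (Q x)) x" "cinner (A (R x)) x"] MQ[of x] MR[of x]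
    by (simp add: bounded_clinear_op_simps[OF lin] cinner_add_left distrib_right)
  then show ?thesis
    unfolding A_form_bounded_def by blast
qed

lemma A_form_bounded_diff:
  assumes A: "positive_op A" and "A_form_bounded A Q" "A_form_bounded A R"
  shows "A_form_bounded A (\<lambda>x. Q x - R x)"
proof -
  obtain MQ MR where
    MQ: "\<And>x. cmod (cinner (A (Q x)) x) \<le> MQ * Re (cinner (A x) x)" and
    MR: "\<And>x. cmod (cinner (A (R x)) x) \<le> MR * Re (cinner (A x) x)"
    using assms(2,3) by (auto simp: A_form_bounded_def)
  have lin: "bounded_clinear_op A"
    using A by (simp add: positive_op_def)
  have "cmod (cinner (A (Q x - R x)) x) \<le> (MQ + MR) * Re (cinner (A x) x)" for x
    using norm_triangle_ineq4[of "cinner (A (Q x)) x" "cinner (A (R x)) x"] MQ[of x] MR[of x]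
    by (simp add: bounded_clinear_op_simps[OF lin] cinner_diff_left distrib_right)
  then show ?thesis
    unfolding A_form_bounded_def by blast
qed

lemma omega_A_bound:
  fixes A T :: "'a::complex_inner \<Rightarrow> 'a"
  assumes A: "positive_op A" and T: "bounded_clinear_op T" and bdd: "A_form_bounded A T"
  shows "cmod (cinner (A (T x)) x) \<le> omega_A A T * Re (cinner (A x) x)"
proof -
  have lin: "bounded_clinear_op A"
    using A by (simp add: positive_op_def)
  define N where "N = {cmod (A_inner A (T x) x) | x. A_inner A x x = 1}"
  have omega: "omega_A A T = Sup N"
    by (simp add: omega_A_def omega_ip_def N_def)
  obtain M where M: "\<And>x. cmod (cinner (A (T x)) x) \<le> M * Re (cinner (A x) x)"
    using bdd by (auto simp: A_form_bounded_def)
  have "bdd_above N"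
    by (rule bdd_aboveI[of _ M]) (auto simp: N_def A_inner_def intro: order_trans[OF M])
  define q where "q = Re (cinner (A x) x)"
  show ?thesis
  proof (cases "q = 0")
    case True
    then have "(cmod (cinner (A (T x)) x))\<^sup>2 \<le> 0"
      using positive_op_Cauchy_Schwarz[OF A, of "T x" x] by (simp add: q_def)
    then show ?thesis
      using True by (simp add: q_def)
  next
    case False
    then have "0 < q"
      using positive_op_form_nonneg[OF A, of x] by (simp add: q_def)
    define z where "z = scaleR (1 / sqrt q) x"
    have "A_inner A z z = 1"
      unfolding z_def q_def using A \<open>0 < q\<close> q_def by (intro A_inner_normalize) simp_all
    moreover have "A_inner A (T z) z = of_real (1 / q) * cinner (A (T x)) x"
      using \<open>0 < q\<close>
      by (simp add: A_inner_def z_def bounded_clinear_op_simps[OF T] cinner_A_scaleR[OF lin])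
    ultimately have "A_inner A z z = 1 \<and> cmod (cinner (A (T x)) x) / q = cmod (A_inner A (T z) z)"
      using \<open>0 < q\<close> by (simp add: norm_divide)
    then have "cmod (cinner (A (T x)) x) / q \<in> N"
      unfolding N_def by blast
    then have "cmod (cinner (A (T x)) x) / q \<le> omega_A A T"
      unfolding omega using \<open>bdd_above N\<close> by (rule cSup_upper)
    then show ?thesis
      using \<open>0 < q\<close> by (simp add: q_def field_simps)
  qed
qed

lemma omega_A_nonneg:
  fixes A T :: "'a::complex_inner \<Rightarrow> 'a"
  assumes A: "positive_op A" and "A \<noteq> (\<lambda>x. 0)"
    and T: "bounded_clinear_op T" and bdd: "A_form_bounded A T"
  shows "0 \<le> omega_A A T"
proof -
  obtain u where u: "A_inner A u u = 1"
    using A_unit_vector_exists[OF A assms(2)] by blast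
  then have "cmod (cinner (A (T u)) u) \<le> omega_A A T"
    using omega_A_bound[OF A T bdd, of u] by (simp add: A_inner_def)
  then show ?thesis
    by (meson norm_ge_zero order_trans)
qed

section \<open>The block operator estimate\<close>

lemma A_polarization_bound:
  fixes A X :: "'a::complex_inner \<Rightarrow> 'a"
  assumes A: "positive_op A" and X: "bounded_clinear_op X"
    and bound: "\<And>z. cmod (cinner (A (X z)) z) \<le> a * Re (cinner (A z) z)"
  shows "cmod (cinner (A (X y)) x + cinner (A (X x)) y) \<le> a * (Re (cinner (A x) x) + Re (cinner (A y) y))"
proof -
  have lin: "bounded_clinear_op A"
    using A by (simp add: positive_op_def)
  note simps = bounded_clinear_op_simps[OF lin] bounded_clinear_op_simps[OF X]
    cinner_add_left cinner_add_right cinner_diff_left cinner_diff_right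
  have polar: "cinner (A (X (x + y))) (x + y) - cinner (A (X (x - y))) (x - y)
      = 2 * (cinner (A (X y)) x + cinner (A (X x)) y)"
    by (simp add: simps algebra_simps)
  have parallelogram: "cinner (A (x + y)) (x + y) + cinner (A (x - y)) (x - y)
      = 2 * cinner (A x) x + 2 * cinner (A y) y"
    by (simp add: simps algebra_simps)
  have "2 * cmod (cinner (A (X y)) x + cinner (A (X x)) y)
      = cmod (cinner (A (X (x + y))) (x + y) - cinner (A (X (x - y))) (x - y))"
    unfolding polar norm_mult by simp
  also have "\<dots> \<le> cmod (cinner (A (X (x + y))) (x + y)) + cmod (cinner (A (X (x - y))) (x - y))"
    by (rule norm_triangle_ineq4)
  also have "\<dots> \<le> a * Re (cinner (A (x + y)) (x + y)) + a * Re (cinner (A (x - y)) (x - y))"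
    by (intro add_mono bound)
  also have "\<dots> = a * (Re (cinner (A (x + y)) (x + y)) + Re (cinner (A (x - y)) (x - y)))"
    by (simp add: distrib_left)
  also have "\<dots> = 2 * (a * (Re (cinner (A x) x) + Re (cinner (A y) y)))"
    using arg_cong[OF parallelogram, of Re] by simp
  finally show ?thesis
    by simp
qed

lemma A_skew_polarization_bound:
  fixes A X :: "'a::complex_inner \<Rightarrow> 'a"
  assumes A: "positive_op A" and X: "bounded_clinear_op X"
    and bound: "\<And>z. cmod (cinner (A (X z)) z) \<le> a * Re (cinner (A z) z)"
  shows "cmod (cinner (A (X y)) x - cinner (A (X x)) y) \<le> a * (Re (cinner (A x) x) + Re (cinner (A y) y))"
proof -
  have lin: "bounded_clinear_op A"
    using A by (simp add: positive_op_def)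
  have "cinner (A (X (cscale \<i> y))) x + cinner (A (X x)) (cscale \<i> y)
      = \<i> * (cinner (A (X y)) x - cinner (A (X x)) y)"
    by (simp add: bounded_clinear_op_simps[OF lin] bounded_clinear_op_simps[OF X]
        cinner_cscale_left cinner_cscale_right algebra_simps)
  moreover have "cinner (A (cscale \<i> y)) (cscale \<i> y) = cinner (A y) y"
    by (simp add: bounded_clinear_op_simps[OF lin] cinner_cscale_left cinner_cscale_right)
  ultimately show ?thesis
    using A_polarization_bound[OF A X bound, of "cscale \<i> y" x] by (simp add: norm_mult)
qed

lemma off_diagonal_bound:
  fixes A Q R :: "'a::complex_inner \<Rightarrow> 'a"
  assumes A: "positive_op A" and Q: "bounded_clinear_op Q" and R: "bounded_clinear_op R"
    and plus: "\<And>z. cmod (cinner (A (Q z + R z)) z) \<le> a * Re (cinner (A z) z)"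
    and minus: "\<And>z. cmod (cinner (A (Q z - R z)) z) \<le> b * Re (cinner (A z) z)"
  shows "cmod (cinner (A (Q y)) x + cinner (A (R x)) y)
    \<le> (a + b) / 2 * (Re (cinner (A x) x) + Re (cinner (A y) y))"
proof -
  have lin: "bounded_clinear_op A"
    using A by (simp add: positive_op_def)
  have "2 * (cinner (A (Q y)) x + cinner (A (R x)) y)
      = (cinner (A (Q y + R y)) x + cinner (A (Q x + R x)) y)
        + (cinner (A (Q y - R y)) x - cinner (A (Q x - R x)) y)"
    by (simp add: bounded_clinear_op_simps[OF lin] cinner_add_left cinner_diff_left algebra_simps)
  then have "2 * cmod (cinner (A (Q y)) x + cinner (A (R x)) y)
      \<le> cmod (cinner (A (Q y + R y)) x + cinner (A (Q x + R x)) y)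
        + cmod (cinner (A (Q y - R y)) x - cinner (A (Q x - R x)) y)"
    by (metis norm_mult norm_numeral norm_triangle_ineq)
  also have "\<dots> \<le> a * (Re (cinner (A x) x) + Re (cinner (A y) y))
      + b * (Re (cinner (A x) x) + Re (cinner (A y) y))"
    using A_polarization_bound[OF A bounded_clinear_op_add[OF Q R] plus]
      A_skew_polarization_bound[OF A bounded_clinear_op_diff[OF Q R] minus]
    by (rule add_mono)
  finally show ?thesis
    by (simp add: field_simps)
qed

lemma le_two_sqrt_mult_if_le_weighted_sums:
  fixes a b e :: real
  assumes "0 \<le> a" "0 \<le> b" and weighted: "\<And>s. 0 < s \<Longrightarrow> e \<le> s * a + b / s"
  shows "e \<le> 2 * sqrt (a * b)"
proof (cases "0 < a \<and> 0 < b")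
  case True
  define s where "s = sqrt b / sqrt a"
  have "0 < s"
    using True by (simp add: s_def)
  moreover have "s * a = sqrt b * (a / sqrt a)" "b / s = sqrt a * (b / sqrt b)"
    using True by (simp_all add: s_def field_simps)
  moreover have "a / sqrt a = sqrt a" "b / sqrt b = sqrt b"
    using True by (simp_all add: real_div_sqrt)
  ultimately show ?thesis
    using weighted[of s] by (simp add: real_sqrt_mult)
next
  case False
  then have ab: "a = 0 \<or> b = 0"
    using assms(1,2) by auto
  show ?thesis
  proof (rule ccontr)
    assume "\<not> ?thesis"
    then have "0 < e"
      using ab by auto
    show False
    proof (cases "a = 0")
      case True
      have "b / ((b + 1) / e) < e"
        using \<open>0 < e\<close> \<open>0 \<le> b\<close> by (simp add: field_simps)
      then show False
        using weighted[of "(b + 1) / e"] True \<open>0 < e\<close> \<open>0 \<le> b\<close> by simp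
    next
      case False
      have "e / (a + 1) * a < e"
        using \<open>0 < e\<close> \<open>0 \<le> a\<close> by (simp add: field_simps)
      then show False
        using weighted[of "e / (a + 1)"] False ab \<open>0 < e\<close> \<open>0 \<le> a\<close> by simp
    qed
  qed
qed

text \<open>The left-hand side is the quadratic form of \<open>[[p, c/2], [c/2, s]]\<close> at the unit vector
  \<open>(sqrt q1, sqrt q2)\<close>.\<close>
lemma weighted_sum_le_max_eigenvalue:
  fixes p s c q1 q2 :: real
  assumes "0 \<le> c" "0 \<le> q1" "0 \<le> q2" "q1 + q2 = 1"
  shows "p * q1 + s * q2 + c * sqrt (q1 * q2) \<le> (p + s + sqrt ((p - s)\<^sup>2 + c\<^sup>2)) / 2"
proof -
  define D where "D = sqrt ((p - s)\<^sup>2 + c\<^sup>2)"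
  have D2: "D\<^sup>2 = (p - s)\<^sup>2 + c\<^sup>2"
    unfolding D_def by simp
  have "sqrt ((p - s)\<^sup>2) \<le> D"
    unfolding D_def by (rule real_sqrt_le_mono) simp
  then have "\<bar>p - s\<bar> \<le> D"
    by simp
  define \<alpha> where "\<alpha> = (s - p + D) / 2"
  define \<beta> where "\<beta> = (p - s + D) / 2"
  have "0 \<le> \<alpha>" "0 \<le> \<beta>"
    using \<open>\<bar>p - s\<bar> \<le> D\<close> by (simp_all add: \<alpha>_def \<beta>_def)
  have "\<alpha> * \<beta> = (c / 2)\<^sup>2"
    unfolding \<alpha>_def \<beta>_def using D2 by (simp add: power2_eq_square algebra_simps)
  then have sab: "sqrt \<alpha> * sqrt \<beta> = c / 2"
    using \<open>0 \<le> c\<close> by (simp add: real_sqrt_mult[symmetric])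
  have "0 \<le> (sqrt \<alpha> * sqrt q1 - sqrt \<beta> * sqrt q2)\<^sup>2"
    by simp
  also have "\<dots> = \<alpha> * q1 - 2 * (sqrt \<alpha> * sqrt \<beta>) * sqrt (q1 * q2) + \<beta> * q2"
    using \<open>0 \<le> \<alpha>\<close> \<open>0 \<le> \<beta>\<close> assms(2,3)
    by (simp add: power2_eq_square real_sqrt_mult algebra_simps)
  finally have "c * sqrt (q1 * q2) \<le> \<alpha> * q1 + \<beta> * q2"
    by (simp add: sab)
  also have "\<alpha> * q1 + \<beta> * q2 = (p + s + D) / 2 * (q1 + q2) - p * q1 - s * q2"
    by (simp add: \<alpha>_def \<beta>_def field_simps)
  finally have "c * sqrt (q1 * q2) \<le> (p + s + D) / 2 - p * q1 - s * q2"
    using assms(4) by simp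
  then show ?thesis
    unfolding D_def by linarith
qed

lemma max_eigenvalue_le:
  fixes p s c :: real
  assumes "0 \<le> c"
  shows "(p + s + sqrt ((p - s)\<^sup>2 + c\<^sup>2)) / 2 \<le> max p s + c / 2"
proof -
  have "sqrt ((p - s)\<^sup>2 + c\<^sup>2) \<le> sqrt ((\<bar>p - s\<bar> + c)\<^sup>2)"
    using assms by (intro real_sqrt_le_mono) (simp add: power2_eq_square algebra_simps)
  also have "\<dots> = \<bar>p - s\<bar> + c"
    using assms by simp
  finally show ?thesis
    using assms by (simp add: max_def abs_if split: if_splits)
qed

lemma off_diagonal_bound_sqrt:
  fixes A Q R :: "'a::complex_inner \<Rightarrow> 'a"
  assumes A: "positive_op A" and Q: "bounded_clinear_op Q" and R: "bounded_clinear_op R"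
    and plus: "\<And>z. cmod (cinner (A (Q z + R z)) z) \<le> a * Re (cinner (A z) z)"
    and minus: "\<And>z. cmod (cinner (A (Q z - R z)) z) \<le> b * Re (cinner (A z) z)"
    and "0 \<le> a + b"
  shows "cmod (cinner (A (Q y)) x + cinner (A (R x)) y)
    \<le> (a + b) * sqrt (Re (cinner (A x) x) * Re (cinner (A y) y))"
proof -
  have lin: "bounded_clinear_op A"
    using A by (simp add: positive_op_def)
  define qx where "qx = Re (cinner (A x) x)"
  define qy where "qy = Re (cinner (A y) y)"
  have "0 \<le> qx" "0 \<le> qy"
    using A by (simp_all add: qx_def qy_def positive_op_form_nonneg)
  have "cmod (cinner (A (Q y)) x + cinner (A (R x)) y) \<le> 2 * sqrt ((a + b) / 2 * qx * ((a + b) / 2 * qy))"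
  proof (rule le_two_sqrt_mult_if_le_weighted_sums)
    show "0 \<le> (a + b) / 2 * qx" "0 \<le> (a + b) / 2 * qy"
      using \<open>0 \<le> a + b\<close> \<open>0 \<le> qx\<close> \<open>0 \<le> qy\<close> by simp_all
    fix \<sigma> :: real
    assume "0 < \<sigma>"
    define t where "t = sqrt \<sigma>"
    have "0 < t" "t * t = \<sigma>"
      using \<open>0 < \<sigma>\<close> by (simp_all add: t_def)
    have "cinner (A (Q (scaleR (1 / t) y))) (scaleR t x) + cinner (A (R (scaleR t x))) (scaleR (1 / t) y)
        = cinner (A (Q y)) x + cinner (A (R x)) y"
      using \<open>0 < t\<close>
      by (simp add: bounded_clinear_op_simps[OF Q] bounded_clinear_op_simps[OF R] cinner_A_scaleR[OF lin])
    moreover have "Re (cinner (A (scaleR t x)) (scaleR t x)) = \<sigma> * qx"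
      "Re (cinner (A (scaleR (1 / t) y)) (scaleR (1 / t) y)) = qy / \<sigma>"
      using \<open>0 < t\<close> by (simp_all add: cinner_A_scaleR[OF lin] qx_def qy_def flip: \<open>t * t = \<sigma>\<close>)
    ultimately have "cmod (cinner (A (Q y)) x + cinner (A (R x)) y) \<le> (a + b) / 2 * (\<sigma> * qx + qy / \<sigma>)"
      using off_diagonal_bound[OF A Q R plus minus, where x = "scaleR t x" and y = "scaleR (1 / t) y"]
      by simp
    also have "\<dots> = \<sigma> * ((a + b) / 2 * qx) + (a + b) / 2 * qy / \<sigma>"
      using \<open>0 < \<sigma>\<close> by (simp add: field_simps)
    finally show "cmod (cinner (A (Q y)) x + cinner (A (R x)) y)
        \<le> \<sigma> * ((a + b) / 2 * qx) + (a + b) / 2 * qy / \<sigma>" .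
  qed
  also have "sqrt ((a + b) / 2 * qx * ((a + b) / 2 * qy)) = (a + b) / 2 * sqrt (qx * qy)"
  proof -
    have "(a + b) / 2 * qx * ((a + b) / 2 * qy) = ((a + b) / 2)\<^sup>2 * (qx * qy)"
      by (simp add: power2_eq_square mult_ac)
    then have "sqrt ((a + b) / 2 * qx * ((a + b) / 2 * qy)) = sqrt (((a + b) / 2)\<^sup>2) * sqrt (qx * qy)"
      by (simp only: real_sqrt_mult)
    also have "sqrt (((a + b) / 2)\<^sup>2) = (a + b) / 2"
      using \<open>0 \<le> a + b\<close> by simp
    finally show ?thesis .
  qed
  finally show ?thesis
    by (simp add: qx_def qy_def)
qed

lemma omega_AA_block_op_le:
  fixes A P Q R S :: "'a::complex_inner \<Rightarrow> 'a"
  assumes A: "positive_op A" and "A \<noteq> (\<lambda>x. 0)"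
    and P: "\<And>x. cmod (cinner (A (P x)) x) \<le> p * Re (cinner (A x) x)"
    and S: "\<And>x. cmod (cinner (A (S x)) x) \<le> s * Re (cinner (A x) x)"
    and off: "\<And>x y. cmod (cinner (A (Q y)) x + cinner (A (R x)) y)
      \<le> c * sqrt (Re (cinner (A x) x) * Re (cinner (A y) y))"
    and "0 \<le> c"
  shows "omega_AA A (block_op P Q R S) \<le> (p + s + sqrt ((p - s)\<^sup>2 + c\<^sup>2)) / 2"
  unfolding omega_AA_def omega_ip_def
proof (rule cSup_least)
  have lin: "bounded_clinear_op A"
    using A by (simp add: positive_op_def)
  obtain u where "A_inner A u u = 1"
    using A_unit_vector_exists[OF A assms(2)] by blast
  then have "AA_inner A (u, 0) (u, 0) = 1"
    by (simp add: AA_inner_def A_inner_def bounded_clinear_op_simps[OF lin])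
  then show "{cmod (AA_inner A (block_op P Q R S z) z) |z. AA_inner A z z = 1} \<noteq> {}"
    by blast
  fix v
  assume "v \<in> {cmod (AA_inner A (block_op P Q R S z) z) |z. AA_inner A z z = 1}"
  then obtain x1 x2 where v: "v = cmod (AA_inner A (block_op P Q R S (x1, x2)) (x1, x2))"
    and unit: "AA_inner A (x1, x2) (x1, x2) = 1"
    by auto
  define q1 where "q1 = Re (cinner (A x1) x1)"
  define q2 where "q2 = Re (cinner (A x2) x2)"
  have "0 \<le> q1" "0 \<le> q2"
    using A by (simp_all add: q1_def q2_def positive_op_form_nonneg)
  have "q1 + q2 = 1"
    using arg_cong[OF unit, of Re] by (simp add: AA_inner_def A_inner_def q1_def q2_def)
  have expand: "AA_inner A (block_op P Q R S (x1, x2)) (x1, x2)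
      = cinner (A (P x1)) x1 + cinner (A (S x2)) x2 + (cinner (A (Q x2)) x1 + cinner (A (R x1)) x2)"
    by (simp add: AA_inner_def A_inner_def block_op_def bounded_clinear_op_simps[OF lin]
        cinner_add_left algebra_simps)
  have "v \<le> cmod (cinner (A (P x1)) x1) + cmod (cinner (A (S x2)) x2)
      + cmod (cinner (A (Q x2)) x1 + cinner (A (R x1)) x2)"
    unfolding v expand by (rule order_trans[OF norm_triangle_ineq]) (simp add: norm_triangle_ineq)
  also have "\<dots> \<le> p * q1 + s * q2 + c * sqrt (q1 * q2)"
    unfolding q1_def q2_def by (intro add_mono P S off)
  also have "\<dots> \<le> (p + s + sqrt ((p - s)\<^sup>2 + c\<^sup>2)) / 2"
    using \<open>0 \<le> c\<close> \<open>0 \<le> q1\<close> \<open>0 \<le> q2\<close> \<open>q1 + q2 = 1\<close> by (rule weighted_sum_le_max_eigenvalue)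
  finally show "v \<le> (p + s + sqrt ((p - s)\<^sup>2 + c\<^sup>2)) / 2" .
qed

theorem theorem2p9:
  fixes A P Q R S :: "'a::chilbert_space \<Rightarrow> 'a"
  assumes "positive_op A" and "A \<noteq> (\<lambda>x. 0)"
    and "P \<in> BA A" and "Q \<in> BA A" and "R \<in> BA A" and "S \<in> BA A"
  shows "omega_AA A (block_op P Q R S)
           \<le> (omega_A A P + omega_A A S
               + sqrt ((omega_A A P - omega_A A S)\<^sup>2
                       + (omega_A A (\<lambda>x. Q x + R x) + omega_A A (\<lambda>x. Q x - R x))\<^sup>2)) / 2
       \<and> (omega_A A P + omega_A A S
               + sqrt ((omega_A A P - omega_A A S)\<^sup>2
                       + (omega_A A (\<lambda>x. Q x + R x) + omega_A A (\<lambda>x. Q x - R x))\<^sup>2)) / 2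
           \<le> max (omega_A A P) (omega_A A S)
             + (omega_A A (\<lambda>x. Q x + R x) + omega_A A (\<lambda>x. Q x - R x)) / 2"
proof -
  note A = assms(1) and nz = assms(2)
  have lin: "bounded_clinear_op P" "bounded_clinear_op Q" "bounded_clinear_op R" "bounded_clinear_op S"
    using assms(3-6) by (simp_all add: BA_def)
  have bdd: "A_form_bounded A P" "A_form_bounded A Q" "A_form_bounded A R" "A_form_bounded A S"
    using assms(3-6) by (simp_all add: BA_imp_A_form_bounded[OF A])
  note plus = bounded_clinear_op_add[OF lin(2,3)] A_form_bounded_add[OF A bdd(2,3)]
  note minus = bounded_clinear_op_diff[OF lin(2,3)] A_form_bounded_diff[OF A bdd(2,3)]
  have "0 \<le> omega_A A (\<lambda>x. Q x + R x) + omega_A A (\<lambda>x. Q x - R x)"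
    using omega_A_nonneg[OF A nz plus] omega_A_nonneg[OF A nz minus] by simp
  then show ?thesis
    by (intro conjI max_eigenvalue_le omega_AA_block_op_le[OF A nz] off_diagonal_bound_sqrt[OF A lin(2,3)]
        omega_A_bound[OF A lin(1) bdd(1)] omega_A_bound[OF A lin(4) bdd(4)]
        omega_A_bound[OF A plus] omega_A_bound[OF A minus])
qed

end
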